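(* For every integer $n\ge1$, $$D_n = D_{2^{|n|+1}}-\omega_n D_{2^{m(n)}}+\sum_{i=0}^{|n|-1}d_{n,i}.$$ Consequently, for every $f\in L^1(\mathbb{I})$, $$S_n f =\mathbb{E}_{|n|+1}f-\omega_n\,\mathbb{E}_{m(n)}(f\omega_n)+\sum_{i=0}^{|n|-1} f*d_{n,i}.$$
   Context: $\mathbb{I}=[0,1)$; $x=\sum_{j\ge0}x_j2^{-j-1}$ ($x_j\in\{0,1\}$, terminating expansion for dyadic rationals), $n=\sum_{j\ge0}n_j2^j$. Dyadic addition: $x\dotplus y=\sum_{j\ge0}|x_j-y_j|2^{-j-1}$. Walsh–Paley functions $\omega_n(x)=\prod_{j\ge0}(-1)^{x_jn_j}$. Dirichlet kernel $D_n=\sum_{k=0}^{n-1}\omega_k$; partial sums $S_nf(y)=\sum_{k=0}^{n-1}\widehat f(k)\omega_k(y)=\int_{\mathbb{I}}f(x\dotplus y)D_n(x)\,dx$ with $\widehat f(k)=\int f\omega_k$. Dyadic convolution $(f*g)(y)=\int_{\mathbb{I}}f(x\dotplus y)g(x)\,dx$. $\mathcal{A}_m$ is the $\sigma$-algebra generated by dyadic intervals $\{y:y_0=x_0,\dots,y_{m-1}=x_{m-1}\}$ of rank $m$, and $\mathbb{E}_m$ the conditional expectation with respect to $\mathcal{A}_m$. For $n\ge1$: $|n|=\max\{j:n_j\neq0\}$, $m(n)=\min\{j:n_j=1\}$. For $0\le i<|n|$: $\lambda_{n,i}=1$ if $m(n)\le i<|n|$ and $n_i=0$, and $\lambda_{n,i}=0$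 otherwise; $d_{n,i}=\lambda_{n,i}\,\omega_n\,(D_{2^i}-D_{2^{i+1}})$. *)

theory Defs
  imports "HOL-Analysis.Analysis"
begin

text \<open>Binary digits of x in [0,1): x = sum_j x_j 2^(-j-1), terminating expansion
  for dyadic rationals.\<close>
definition digit :: "real \<Rightarrow> nat \<Rightarrow> nat" where
  "digit x j = nat \<lfloor>2 ^ (j + 1) * x\<rfloor> mod 2"

definition nbit :: "nat \<Rightarrow> nat \<Rightarrow> nat" where
  "nbit n j = n div 2 ^ j mod 2"

definition dplus :: "real \<Rightarrow> real \<Rightarrow> real" where
  "dplus x y = (\<Sum>j. (if digit x j = digit y j then 0 else 1) / 2 ^ (j + 1))"

text \<open>Walsh-Paley functions (bits of n vanish from index n on, since n < 2^n).\<close>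
definition walsh :: "nat \<Rightarrow> real \<Rightarrow> real" where
  "walsh n x = (\<Prod>j<n. (-1) ^ (digit x j * nbit n j))"

definition dirichlet :: "nat \<Rightarrow> real \<Rightarrow> real" where
  "dirichlet n x = (\<Sum>k<n. walsh k x)"

definition walsh_coeff :: "(real \<Rightarrow> real) \<Rightarrow> nat \<Rightarrow> real" where
  "walsh_coeff f k = (LINT x:{0..<1}|lborel. f x * walsh k x)"

definition partial_sum :: "nat \<Rightarrow> (real \<Rightarrow> real) \<Rightarrow> real \<Rightarrow> real" where
  "partial_sum n f y = (\<Sum>k<n. walsh_coeff f k * walsh k y)"

definition dconv :: "(real \<Rightarrow> real) \<Rightarrow> (real \<Rightarrow> real) \<Rightarrow> real \<Rightarrow> real" where
  "dconv f g y = (LINT x:{0..<1}|lborel. f (dplus x y) * g x)"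

definition dyad_int :: "nat \<Rightarrow> real \<Rightarrow> real set" where
  "dyad_int m y = {x \<in> {0..<1}. \<forall>j<m. digit x j = digit y j}"

text \<open>Conditional expectation with respect to A_m (finite sigma-algebra generated by
  the 2^m dyadic intervals of rank m, each of Lebesgue measure 2^(-m)): the average of f
  over the atom containing y.\<close>
definition cond_exp_dyad :: "nat \<Rightarrow> (real \<Rightarrow> real) \<Rightarrow> real \<Rightarrow> real" where
  "cond_exp_dyad m f y = 2 ^ m * (LINT x:dyad_int m y|lborel. f x)"

text \<open>|n| and m(n).\<close>
definition top_bit :: "nat \<Rightarrow> nat" where
  "top_bit n = (GREATEST j. nbit n j \<noteq> 0)"

definition low_bit :: "nat \<Rightarrow> nat" where
  "low_bit n = (LEAST j. nbit n j = 1)"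

definition lam :: "nat \<Rightarrow> nat \<Rightarrow> real" where
  "lam n i = (if low_bit n \<le> i \<and> i < top_bit n \<and> nbit n i = 0 then 1 else 0)"

definition dker :: "nat \<Rightarrow> nat \<Rightarrow> real \<Rightarrow> real" where
  "dker n i x = lam n i * walsh n x * (dirichlet (2 ^ i) x - dirichlet (2 ^ (i + 1)) x)"

end

theory Submission
  imports Defs
begin

text \<open>Write \<open>n = 2^t + k\<close> with \<open>k < 2^t\<close> and let \<open>r(x) = (-1)^x\<^sub>t\<close>. Then
  \<open>\<omega>\<^sub>n = r \<omega>\<^sub>k\<close> and \<open>D\<^sub>n = D\<^bsub>2^t\<^esub> + r D\<^sub>k\<close>, while \<open>D\<^bsub>2^a\<^esub>\<close> is \<open>2^a\<close> times the
  indicator of the dyadic interval of rank \<open>a\<close> containing \<open>0\<close>. The kernel identity follows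
  by strong induction on \<open>n\<close>; the only extra input is that \<open>\<omega>\<^sub>k = 1\<close> wherever
  \<open>D\<^bsub>2^(|k|+1)\<^esub> - D\<^bsub>2^t\<^esub>\<close> does not vanish.

  For the partial sums, \<open>S\<^sub>nf(y) = \<integral> f(x) D\<^sub>n(x \<oplus> y) dx\<close>. Inserting the kernel identity at
  \<open>x \<oplus> y\<close>, the terms \<open>D\<^bsub>2^a\<^esub>(x \<oplus> y)\<close> are \<open>2^a\<close> times the indicator of the rank-\<open>a\<close>
  interval of \<open>y\<close>, which gives the conditional expectations, and the remaining terms become the
  dyadic convolutions after the change of variables \<open>x \<mapsto> x \<oplus> y\<close>. This map preserves
  Lebesgue measure on \<open>[0,1)\<close>: up to a null set it maps every dyadic interval onto a dyadic
  interval of the same rank, and these intervals generate the Borel sets.\<close>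

section \<open>Binary digits\<close>

definition dyad_index :: "nat \<Rightarrow> real \<Rightarrow> nat" where
  "dyad_index j x = nat \<lfloor>2 ^ j * x\<rfloor>"

lemma digit_le_1: "digit x j \<le> 1"
  by (simp add: digit_def)

lemma digit_cases: "digit x j = 0 \<or> digit x j = 1"
  using digit_le_1[of x j] by linarith

lemma dyad_index_div:
  assumes "0 \<le> x"
  shows "dyad_index (j + d) x div 2 ^ d = dyad_index j x"
proof -
  have "\<lfloor>2 ^ (j + d) * x\<rfloor> div 2 ^ d = \<lfloor>2 ^ (j + d) * x / real_of_int (2 ^ d)\<rfloor>"
    by (rule floor_divide_real_eq_div[symmetric]) simp
  also have "\<dots> = \<lfloor>2 ^ j * x\<rfloor>"
    by (simp add: power_add)
  finally have "nat (\<lfloor>2 ^ (j + d) * x\<rfloor> div 2 ^ d) = nat \<lfloor>2 ^ j * x\<rfloor>"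
    by simp
  then show ?thesis
    unfolding dyad_index_def using assms by (simp add: nat_div_distrib nat_power_eq)
qed

lemma dyad_index_Suc:
  assumes "0 \<le> x"
  shows "dyad_index (Suc j) x = 2 * dyad_index j x + digit x j"
proof -
  have "dyad_index (Suc j) x div 2 = dyad_index j x"
    using dyad_index_div[OF assms, of j 1] by simp
  moreover have "dyad_index (Suc j) x mod 2 = digit x j"
    by (simp add: dyad_index_def digit_def)
  ultimately show ?thesis
    by (metis div_mult_mod_eq mult.commute)
qed

lemma dyad_index_0: "x \<in> {0..<1} \<Longrightarrow> dyad_index 0 x = 0"
  by (simp add: dyad_index_def floor_eq_iff)

lemma dyad_index_less:
  assumes "x \<in> {0..<1}"
  shows "dyad_index j x < 2 ^ j"
proof -
  have "\<lfloor>2 ^ j * x\<rfloor> < 2 ^ j"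
    using assms by (simp add: floor_less_iff)
  then show ?thesis
    using assms by (simp add: dyad_index_def nat_less_iff)
qed

lemma dyad_index_bounds:
  assumes "0 \<le> x"
  shows "2 ^ j * x - 1 < real (dyad_index j x)" "real (dyad_index j x) \<le> 2 ^ j * x"
proof -
  have "real (dyad_index j x) = of_int \<lfloor>2 ^ j * x\<rfloor>"
    using assms by (simp add: dyad_index_def)
  then show "2 ^ j * x - 1 < real (dyad_index j x)" "real (dyad_index j x) \<le> 2 ^ j * x"
    by linarith+
qed

lemma dyad_index_eq_iff:
  assumes "x \<in> {0..<1}" "y \<in> {0..<1}"
  shows "dyad_index j x = dyad_index j y \<longleftrightarrow> (\<forall>i<j. digit x i = digit y i)"
proof (induction j)
  case 0
  then show ?case
    using assms by (simp add: dyad_index_0)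
next
  case (Suc j)
  have "dyad_index (Suc j) x = dyad_index (Suc j) y \<longleftrightarrow>
      dyad_index j x = dyad_index j y \<and> digit x j = digit y j"
    using assms digit_le_1[of x j] digit_le_1[of y j] by (simp add: dyad_index_Suc) presburger
  then show ?case
    using Suc by (auto simp: less_Suc_eq)
qed

definition bin_value :: "(nat \<Rightarrow> nat) \<Rightarrow> real" where
  "bin_value c = (\<Sum>j. real (c j) / 2 ^ (j + 1))"

fun bin_prefix :: "(nat \<Rightarrow> nat) \<Rightarrow> nat \<Rightarrow> nat" where
  "bin_prefix c 0 = 0"
| "bin_prefix c (Suc j) = 2 * bin_prefix c j + c j"

lemma sum_bin_value_prefix: "(\<Sum>i<j. real (c i) / 2 ^ (i + 1)) = real (bin_prefix c j) / 2 ^ j"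
  by (induction j) (auto simp: field_simps)

lemma summable_bin_value:
  assumes "\<And>i. c i \<le> 1"
  shows "summable (\<lambda>j. real (c j) / 2 ^ (j + 1))"
proof (rule summable_comparison_test')
  show "summable (\<lambda>j. (1/2::real) ^ Suc j)"
    using power_half_series summable_def by blast
  show "norm (real (c j) / 2 ^ (j + 1)) \<le> (1/2) ^ Suc j" for j
    using assms[of j] by (simp add: field_simps power_divide)
qed

lemma bin_value_nonneg: "(\<And>i. c i \<le> 1) \<Longrightarrow> 0 \<le> bin_value c"
  unfolding bin_value_def by (intro suminf_nonneg summable_bin_value) auto

lemma bin_value_le_1:
  assumes "\<And>i. c i \<le> 1"
  shows "bin_value c \<le> 1"
proof -
  have "bin_value c \<le> (\<Sum>j. (1/2::real) ^ Suc j)"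
    unfolding bin_value_def
  proof (rule suminf_le)
    show "real (c j) / 2 ^ (j + 1) \<le> (1/2) ^ Suc j" for j
      using assms[of j] by (simp add: field_simps power_divide)
  qed (use summable_bin_value assms power_half_series summable_def in auto)
  then show ?thesis
    using sums_unique[OF power_half_series] by simp
qed

lemma bin_value_less_1:
  assumes c: "\<And>i. c i \<le> 1" and "c i = 0"
  shows "bin_value c < 1"
proof -
  define g where "g j = (1/2::real) ^ Suc j - real (c j) / 2 ^ (j + 1)" for j
  have sum_half: "summable (\<lambda>j. (1/2::real) ^ Suc j)"
    using power_half_series summable_def by blast
  have "0 < suminf g"
  proof (rule suminf_pos2)
    show "summable g"
      unfolding g_def by (intro summable_diff sum_half summable_bin_value c)
    show "0 \<le> g j" for j
      using c[of j] by (simp add: g_def field_simps power_divide)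
    show "0 < g i"
      using \<open>c i = 0\<close> by (simp add: g_def)
  qed
  also have "suminf g = 1 - bin_value c"
    unfolding g_def bin_value_def
    using suminf_diff[OF sum_half summable_bin_value[of c, OF c]] sums_unique[OF power_half_series]
    by simp
  finally show ?thesis
    by simp
qed

lemma bin_value_shift:
  assumes c: "\<And>i. c i \<le> 1"
  shows "2 ^ j * bin_value c = real (bin_prefix c j) + bin_value (\<lambda>i. c (i + j))"
proof -
  have shifted: "(\<Sum>i. real (c (i + j)) / 2 ^ (i + j + 1)) = bin_value (\<lambda>i. c (i + j)) / 2 ^ j"
    using suminf_divide[OF summable_bin_value[of "\<lambda>i. c (i + j)"], where c = "2 ^ j"] c
    by (simp add: bin_value_def power_add mult_ac)
  have "bin_value c = (\<Sum>i. real (c (i + j)) / 2 ^ (i + j + 1)) + real (bin_prefix c j) / 2 ^ j"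
    unfolding bin_value_def
    using suminf_split_initial_segment[OF summable_bin_value[of c, OF c], where k = j]
      sum_bin_value_prefix[of c j]
    by simp
  then show ?thesis
    unfolding shifted by (simp add: field_simps)
qed

text \<open>Without infinitely many zero digits, \<open>c\<close> could be a non-terminating expansion of a
  dyadic rational, whose digits in the sense of \<open>digit\<close> are those of the terminating one.\<close>

lemma
  assumes c: "\<And>i. c i \<le> 1" and zeros: "\<exists>\<^sub>\<infinity>i. c i = 0"
  shows bin_value_mem: "bin_value c \<in> {0..<1}"
    and digit_bin_value: "digit (bin_value c) j = c j"
proof -
  have index: "dyad_index j (bin_value c) = bin_prefix c j" for j
  proof -
    obtain i where "i \<ge> j" "c i = 0"
      using zeros by (auto simp: INFM_nat_le)
    then have "bin_value (\<lambda>i. c (i + j)) < 1"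
      using c by (intro bin_value_less_1[where i = "i - j"]) auto
    moreover have "0 \<le> bin_value (\<lambda>i. c (i + j))"
      using c by (intro bin_value_nonneg)
    ultimately have "\<lfloor>bin_value (\<lambda>i. c (i + j))\<rfloor> = 0"
      by (simp add: floor_eq_iff)
    then show ?thesis
      unfolding dyad_index_def bin_value_shift[OF c] by simp
  qed
  show "bin_value c \<in> {0..<1}"
    using index[of 0] c by (simp add: dyad_index_def bin_value_nonneg)
  show "digit (bin_value c) j = c j"
    using index[of "Suc j"] c[of j] by (simp add: digit_def dyad_index_def)
qed

lemma bin_prefix_digit: "x \<in> {0..<1} \<Longrightarrow> bin_prefix (digit x) j = dyad_index j x"
  by (induction j) (auto simp: dyad_index_0 dyad_index_Suc)

lemma bin_value_digit:
  assumes x: "x \<in> {0..<1}"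
  shows "bin_value (digit x) = x"
proof -
  have "(\<lambda>j. real (dyad_index j x) / 2 ^ j) \<longlonglongrightarrow> x"
  proof (rule tendsto_sandwich)
    have "x - 1 / 2 ^ j \<le> real (dyad_index j x) / 2 ^ j" for j
    proof -
      have "x - 1 / 2 ^ j = (2 ^ j * x - 1) / 2 ^ j"
        by (simp add: field_simps)
      also have "\<dots> \<le> real (dyad_index j x) / 2 ^ j"
        using x dyad_index_bounds(1)[of x j] by (intro divide_right_mono) auto
      finally show ?thesis .
    qed
    then show "\<forall>\<^sub>F j in sequentially. x - 1 / 2 ^ j \<le> real (dyad_index j x) / 2 ^ j"
      by simp
    show "\<forall>\<^sub>F j in sequentially. real (dyad_index j x) / 2 ^ j \<le> x"
      using x dyad_index_bounds(2)[of x] by (intro always_eventually allI) (simp add: field_simps)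
    show "(\<lambda>j. x - 1 / 2 ^ j) \<longlonglongrightarrow> x"
      using tendsto_diff[OF tendsto_const LIMSEQ_divide_realpow_zero[of 2 1], of x] by simp
  qed simp
  then have "(\<lambda>j. real (digit x j) / 2 ^ (j + 1)) sums x"
    using sum_bin_value_prefix[of "digit x"] bin_prefix_digit[OF x] by (simp add: sums_def)
  then show ?thesis
    by (simp add: bin_value_def sums_iff)
qed

section \<open>Walsh functions and Dirichlet kernels\<close>

lemma nbit_eq_0:
  assumes "k < 2 ^ N" "N \<le> j"
  shows "nbit k j = 0"
proof -
  have "k < 2 ^ j"
    using assms by (meson order_less_le_trans one_le_numeral power_increasing)
  then show ?thesis
    by (simp add: nbit_def)
qed

lemma nbit_pow_add:
  assumes "k < 2 ^ t"
  shows "nbit (2 ^ t + k) j = (if j = t then 1 else nbit k j)"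
proof (cases j t rule: linorder_cases)
  case less
  then have "(2::nat) ^ t = 2 ^ (t - j) * 2 ^ j" "(2::nat) ^ (t - j) = 2 * 2 ^ (t - Suc j)"
    by (simp_all flip: power_add power_Suc add: Suc_diff_Suc)
  then show ?thesis
    using less by (simp add: nbit_def add.commute)
next
  case greater
  then show ?thesis
    using assms nbit_eq_0[of "2 ^ t + k" "Suc t" j] nbit_eq_0[of k t j] by simp
qed (use assms in \<open>simp add: nbit_def\<close>)

lemma walsh_eq_prod:
  assumes "k < 2 ^ N"
  shows "walsh k x = (\<Prod>j<N. (-1) ^ (digit x j * nbit k j))"
proof -
  let ?w = "\<lambda>j. (-1::real) ^ (digit x j * nbit k j)"
  have trivial: "?w j = 1" if "k < 2 ^ M" "M \<le> j" for M j
    using nbit_eq_0[OF that] by simp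
  have "prod ?w {..<max k N} = prod ?w {..<k}" "prod ?w {..<max k N} = prod ?w {..<N}"
    using trivial[of k] trivial[of N] assms
    by (auto intro!: prod.mono_neutral_right simp: less_exp) (meson not_less)+
  then show ?thesis
    by (simp add: walsh_def)
qed

lemma walsh_0 [simp]: "walsh 0 x = 1"
  by (simp add: walsh_def)

lemma walsh_pow_add:
  assumes "k < 2 ^ t"
  shows "walsh (2 ^ t + k) x = (-1) ^ digit x t * walsh k x"
proof -
  have "2 ^ t + k < 2 ^ Suc t"
    using assms by simp
  then have "walsh (2 ^ t + k) x = (\<Prod>j<Suc t. (-1) ^ (digit x j * nbit (2 ^ t + k) j))"
    by (rule walsh_eq_prod)
  also have "\<dots> = (-1) ^ digit x t * (\<Prod>j<t. (-1) ^ (digit x j * nbit k j))"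
    using assms by (simp add: nbit_pow_add)
  finally show ?thesis
    using walsh_eq_prod[OF assms] by simp
qed

lemma walsh_eq_1:
  assumes "k < 2 ^ a" "\<forall>j<a. digit x j = 0"
  shows "walsh k x = 1"
  using assms by (simp add: walsh_eq_prod)

lemma dirichlet_pow_add:
  assumes "k \<le> 2 ^ t"
  shows "dirichlet (2 ^ t + k) x = dirichlet (2 ^ t) x + (-1) ^ digit x t * dirichlet k x"
  using assms
proof (induction k)
  case (Suc k)
  then show ?case
    using walsh_pow_add[of k t x] by (simp add: dirichlet_def algebra_simps)
qed (simp add: dirichlet_def)

lemma dirichlet_pow2: "dirichlet (2 ^ a) x = (if \<forall>j<a. digit x j = 0 then 2 ^ a else 0)"
proof (induction a)
  case 0
  then show ?case
    by (simp add: dirichlet_def)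
next
  case (Suc a)
  have "dirichlet (2 ^ Suc a) x = (1 + (-1) ^ digit x a) * dirichlet (2 ^ a) x"
    using dirichlet_pow_add[of "2 ^ a" a x] by (simp add: mult_2 algebra_simps)
  then show ?case
    using Suc digit_cases[of x a] by (auto simp: less_Suc_eq)
qed

section \<open>The kernel identity\<close>

lemma pow_add_decomp:
  fixes n :: nat
  assumes "1 \<le> n"
  obtains t k where "n = 2 ^ t + k" "k < 2 ^ t"
proof -
  obtain t where "2 ^ t \<le> n" "n < 2 ^ (t + 1)"
    using ex_power_ivl1[of 2 n] assms by auto
  then show ?thesis
    by (intro that[of t "n - 2 ^ t"]) auto
qed

lemma less_of_pow_add_less: "(2::nat) ^ s + r < 2 ^ t \<Longrightarrow> s < t"
  by (metis add_lessD1 nat_power_less_imp_less pos2)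

lemma top_bit_pow_add:
  assumes "k < 2 ^ t"
  shows "top_bit (2 ^ t + k) = t"
  unfolding top_bit_def
proof (rule Greatest_equality)
  show "nbit (2 ^ t + k) t \<noteq> 0"
    using assms by (simp add: nbit_pow_add)
  show "j \<le> t" if "nbit (2 ^ t + k) j \<noteq> 0" for j
    using that assms nbit_eq_0[of "2 ^ t + k" "Suc t" j] by (cases "j \<le> t") auto
qed

lemma top_bit_pow: "top_bit (2 ^ t) = t"
  using top_bit_pow_add[of 0 t] by simp

lemma low_bit_le: "nbit n j = 1 \<Longrightarrow> low_bit n \<le> j"
  by (simp add: low_bit_def Least_le)

lemma nbit_pow: "nbit (2 ^ t) j = (if j = t then 1 else 0)"
  using nbit_pow_add[of 0 t j] by (simp add: nbit_def[of 0])

lemma low_bit_pow: "low_bit (2 ^ t) = t"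
  unfolding low_bit_def by (rule Least_equality) (auto simp: nbit_pow split: if_splits)

lemma Least_cong_below:
  fixes m :: nat
  assumes "P m" "\<And>j. j \<le> m \<Longrightarrow> P j \<longleftrightarrow> Q j"
  shows "(LEAST j. P j) = (LEAST j. Q j)"
proof -
  have "(LEAST j. P j) \<le> m"
    using assms(1) by (rule Least_le)
  moreover have "Q (LEAST j. P j)"
    using LeastI[of P, OF assms(1)] calculation assms(2) by blast
  moreover have "\<not> Q j" if "j < (LEAST j. P j)" for j
    using not_less_Least[OF that] that calculation(1) assms(2)[of j] by simp
  ultimately show ?thesis
    by (metis Least_equality not_less)
qed

lemma low_bit_pow_add:
  assumes k: "k = 2 ^ s + r" "r < 2 ^ s" and "k < 2 ^ t"
  shows "low_bit (2 ^ t + k) = low_bit k"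
proof -
  have "s < t"
    using assms by (simp add: less_of_pow_add_less)
  have "nbit k s = 1"
    using k by (simp add: nbit_pow_add)
  then show ?thesis
    unfolding low_bit_def
    by (intro Least_cong_below[symmetric, where m = s]) (use assms \<open>s < t\<close> in \<open>auto simp: nbit_pow_add\<close>)
qed

lemma lam_pow: "lam (2 ^ t) i = 0"
  by (simp add: lam_def low_bit_pow top_bit_pow)

lemma lam_pow_add:
  assumes k: "k = 2 ^ s + r" "r < 2 ^ s" and "k < 2 ^ t" "i < t"
  shows "lam (2 ^ t + k) i = (if i < s then lam k i else if i = s then 0 else 1)"
proof -
  have "s < t"
    using assms by (simp add: less_of_pow_add_less)
  have "nbit k s = 1"
    using k by (simp add: nbit_pow_add)
  then have "low_bit k \<le> s"
    by (rule low_bit_le)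
  moreover have "nbit k i = 0" if "s < i"
    using that k nbit_eq_0[of r s i] by (simp add: nbit_pow_add)
  ultimately show ?thesis
    using assms \<open>s < t\<close> \<open>nbit k s = 1\<close>
    by (auto simp: lam_def top_bit_pow_add low_bit_pow_add nbit_pow_add)
qed

definition lam_kernel :: "nat \<Rightarrow> real \<Rightarrow> real" where
  "lam_kernel n x = (\<Sum>i<top_bit n. lam n i * (dirichlet (2 ^ i) x - dirichlet (2 ^ (i + 1)) x))"

lemma sum_dker: "(\<Sum>i<top_bit n. dker n i x) = walsh n x * lam_kernel n x"
  by (simp add: dker_def lam_kernel_def sum_distrib_left algebra_simps)

lemma lam_kernel_pow: "lam_kernel (2 ^ t) x = 0"
  by (simp add: lam_kernel_def lam_pow)

lemma lam_kernel_pow_add: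
  assumes k: "k = 2 ^ s + r" "r < 2 ^ s" and "k < 2 ^ t"
  shows "lam_kernel (2 ^ t + k) x = lam_kernel k x + (dirichlet (2 ^ Suc s) x - dirichlet (2 ^ t) x)"
proof -
  let ?g = "\<lambda>i. dirichlet (2 ^ i) x - dirichlet (2 ^ (i + 1)) x"
  have "s < t"
    using assms by (simp add: less_of_pow_add_less)
  have "lam_kernel (2 ^ t + k) x = (\<Sum>i<t. lam (2 ^ t + k) i * ?g i)"
    using assms by (simp add: lam_kernel_def top_bit_pow_add)
  also have "\<dots> = (\<Sum>i<Suc s. lam (2 ^ t + k) i * ?g i) + (\<Sum>i=Suc s..<t. lam (2 ^ t + k) i * ?g i)"
    unfolding lessThan_atLeast0 using \<open>s < t\<close> by (intro sum.atLeastLessThan_concat[symmetric]) auto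
  also have "(\<Sum>i<Suc s. lam (2 ^ t + k) i * ?g i) = lam_kernel k x"
    using assms \<open>s < t\<close> by (simp add: lam_kernel_def lam_pow_add top_bit_pow_add)
  also have "(\<Sum>i=Suc s..<t. lam (2 ^ t + k) i * ?g i) = (\<Sum>i=Suc s..<t. ?g i)"
    using assms by (intro sum.cong) (auto simp: lam_pow_add)
  also have "\<dots> = dirichlet (2 ^ Suc s) x - dirichlet (2 ^ t) x"
    using sum_Suc_diff'[of "Suc s" t "\<lambda>i. - dirichlet (2 ^ i) x"] \<open>s < t\<close> by simp
  finally show ?thesis .
qed

text \<open>Either the first \<open>s\<close> digits of \<open>x\<close> vanish, and then \<open>walsh k x = 1\<close>,
  or both Dirichlet kernels vanish at \<open>x\<close>.\<close>

lemma walsh_dirichlet_pow_diff: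
  assumes "k < 2 ^ s" "s \<le> t"
  shows "walsh k x * (dirichlet (2 ^ s) x - dirichlet (2 ^ t) x) = dirichlet (2 ^ s) x - dirichlet (2 ^ t) x"
proof (cases "\<forall>j<s. digit x j = 0")
  case True
  then show ?thesis
    using assms(1) by (simp add: walsh_eq_1)
next
  case False
  moreover have "\<not> (\<forall>j<t. digit x j = 0)"
    using False assms(2) by (meson order_less_le_trans)
  ultimately have "dirichlet (2 ^ s) x = 0" "dirichlet (2 ^ t) x = 0"
    by (simp_all only: dirichlet_pow2 if_False)
  then show ?thesis
    by simp
qed

lemma dirichlet_decomp:
  assumes "1 \<le> n"
  shows "dirichlet n x = dirichlet (2 ^ (top_bit n + 1)) x - walsh n x * dirichlet (2 ^ low_bit n) x
    + walsh n x * lam_kernel n x"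
  using assms
proof (induction n rule: less_induct)
  case (less n)
  obtain t k where n: "n = 2 ^ t + k" and "k < 2 ^ t"
    using pow_add_decomp less.prems by blast
  let ?\<rho> = "(-1) ^ digit x t :: real"
  have double: "dirichlet (2 ^ (t + 1)) x = dirichlet (2 ^ t) x + ?\<rho> * dirichlet (2 ^ t) x"
    using dirichlet_pow_add[of "2 ^ t" t x] by (simp flip: mult_2)
  show ?case
  proof (cases "k = 0")
    case True
    then show ?thesis
      using n double walsh_pow_add[of 0 t x]
      by (simp add: top_bit_pow low_bit_pow lam_kernel_pow)
  next
    case False
    then have "1 \<le> k"
      by simp
    then obtain s r where k: "k = 2 ^ s + r" "r < 2 ^ s"
      by (rule pow_add_decomp)
    have "s < t"
      using k \<open>k < 2 ^ t\<close> by (simp add: less_of_pow_add_less)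
    define A where "A = dirichlet (2 ^ Suc s) x"
    define B where "B = dirichlet (2 ^ t) x"
    define D where "D = dirichlet (2 ^ low_bit k) x"
    have IH: "dirichlet k x = A - walsh k x * D + walsh k x * lam_kernel k x"
      using less.IH[of k] \<open>1 \<le> k\<close> n k by (simp add: A_def D_def top_bit_pow_add)
    have key: "walsh k x * (A - B) = A - B"
      using k \<open>s < t\<close> unfolding A_def B_def by (intro walsh_dirichlet_pow_diff) auto
    have "dirichlet n x = B + ?\<rho> * dirichlet k x"
      using n \<open>k < 2 ^ t\<close> by (simp add: dirichlet_pow_add B_def)
    also have "\<dots> = (B + ?\<rho> * B) - (?\<rho> * walsh k x) * D
        + (?\<rho> * walsh k x) * (lam_kernel k x + (A - B)) + ?\<rho> * ((A - B) - walsh k x * (A - B))"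
      unfolding IH by (simp add: algebra_simps)
    finally have "dirichlet n x = (B + ?\<rho> * B) - (?\<rho> * walsh k x) * D
        + (?\<rho> * walsh k x) * (lam_kernel k x + (A - B))"
      unfolding key by simp
    then show ?thesis
      using n k \<open>k < 2 ^ t\<close> double
      by (simp add: A_def B_def D_def top_bit_pow_add low_bit_pow_add walsh_pow_add lam_kernel_pow_add)
  qed
qed

lemma dirichlet_decomp_dker:
  assumes "1 \<le> n"
  shows "dirichlet n x = dirichlet (2 ^ (top_bit n + 1)) x - walsh n x * dirichlet (2 ^ low_bit n) x
    + (\<Sum>i<top_bit n. dker n i x)"
  using dirichlet_decomp[OF assms] by (simp add: sum_dker)

section \<open>Dyadic translation\<close>

definition dxor :: "real \<Rightarrow> real \<Rightarrow> nat \<Rightarrow> nat" where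
  "dxor x y j = (if digit x j = digit y j then 0 else 1)"

lemma dxor_le_1: "dxor x y j \<le> 1"
  by (simp add: dxor_def)

lemma dplus_eq_bin_value: "dplus x y = bin_value (dxor x y)"
  unfolding dplus_def bin_value_def dxor_def by (rule suminf_cong) simp

text \<open>\<open>dplus x y\<close> can equal \<open>1\<close> (when all digits of \<open>x\<close> and \<open>y\<close> differ); \<open>dtrans y\<close>
  sends this value to \<open>0\<close> so that it maps \<open>[0,1)\<close> into itself. Off the null set of \<open>x\<close>
  whose digits eventually all differ from those of \<open>y\<close>, it is the digitwise XOR.\<close>

definition dtrans :: "real \<Rightarrow> real \<Rightarrow> real" where
  "dtrans y x = (if dplus x y < 1 then dplus x y else 0)"

lemma dtrans_mem: "dtrans y x \<in> {0..<1}"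
  using bin_value_nonneg[of "dxor x y", OF dxor_le_1]
  by (simp add: dtrans_def dplus_eq_bin_value)

lemma
  assumes "\<exists>\<^sub>\<infinity>i. digit x i = digit y i"
  shows dtrans_eq_dplus: "dtrans y x = dplus x y"
    and digit_dtrans: "digit (dtrans y x) j = dxor x y j"
proof -
  have zeros: "\<exists>\<^sub>\<infinity>i. dxor x y i = 0"
    using assms by (simp add: dxor_def)
  show "dtrans y x = dplus x y"
    using bin_value_mem[OF dxor_le_1 zeros] by (simp add: dtrans_def dplus_eq_bin_value)
  then show "digit (dtrans y x) j = dxor x y j"
    using digit_bin_value[OF dxor_le_1 zeros] by (simp add: dplus_eq_bin_value)
qed

lemma dxor_dtrans:
  assumes "\<exists>\<^sub>\<infinity>i. digit x i = digit y i"
  shows "dxor (dtrans y x) y = digit x"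
proof
  fix j
  show "dxor (dtrans y x) y j = digit x j"
    using digit_cases[of x j] digit_cases[of y j]
    by (elim disjE) (simp_all add: digit_dtrans[OF assms] dxor_def)
qed

lemma dtrans_dtrans:
  assumes "x \<in> {0..<1}" "\<exists>\<^sub>\<infinity>i. digit x i = digit y i"
  shows "dtrans y (dtrans y x) = x"
  using assms bin_value_digit[of x]
  by (simp add: dtrans_def[of y "dtrans y x"] dplus_eq_bin_value dxor_dtrans)

lemma countable_eventually_complementary:
  "countable {x \<in> {0..<1}. \<not> (\<exists>\<^sub>\<infinity>i. digit x i = digit y i)}"
proof -
  define Z where "Z N = {x \<in> {0..<1}. \<forall>i\<ge>N. digit x i \<noteq> digit y i}" for N
  have "countable (Z N)" for N
  proof (rule countableI[of "dyad_index N"], rule inj_onI)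
    fix a b assume a: "a \<in> Z N" and b: "b \<in> Z N" and "dyad_index N a = dyad_index N b"
    then have "digit a i = digit b i" if "i < N" for i
      using that by (simp add: Z_def dyad_index_eq_iff)
    moreover have "digit a i = digit b i" if "N \<le> i" for i
    proof -
      have "digit a i \<noteq> digit y i" "digit b i \<noteq> digit y i"
        using a b that by (simp_all add: Z_def)
      then show ?thesis
        using digit_cases[of a i] digit_cases[of b i] digit_cases[of y i] by linarith
    qed
    ultimately have "digit a = digit b"
      by (meson ext not_le)
    moreover have "a \<in> {0..<1}" "b \<in> {0..<1}"
      using a b by (simp_all add: Z_def)
    ultimately show "a = b"
      by (metis bin_value_digit)
  qed
  moreover have "{x \<in> {0..<1}. \<not> (\<exists>\<^sub>\<infinity>i. digit x i = digit y i)} \<subseteq> (\<Union>N. Z N)"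
    by (auto simp: Z_def MOST_nat_le)
  ultimately show ?thesis
    by (meson countable_UN countable_subset UNIV_I countableI_type)
qed

abbreviation lebesgue01 :: "real measure" where
  "lebesgue01 \<equiv> restrict_space lborel {0..<1}"

lemma space_lebesgue01: "space lebesgue01 = {0..<1}"
  by (simp add: space_restrict_space)

lemma AE_digits_agree_infinitely_often: "AE x in lebesgue01. \<exists>\<^sub>\<infinity>i. digit x i = digit y i"
proof -
  let ?N = "{x \<in> {0..<1}. \<not> (\<exists>\<^sub>\<infinity>i. digit x i = digit y i)}"
  have "?N \<in> null_sets lebesgue01"
    using countable_imp_null_set_lborel[OF countable_eventually_complementary]
    by (auto simp: null_sets_restrict_space)
  then have "AE x in lebesgue01. x \<notin> ?N"
    by (rule AE_not_in)
  then show ?thesis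
    by (rule AE_mp) (auto simp: space_lebesgue01)
qed

lemma measurable_digit [measurable]: "(\<lambda>x. digit x j) \<in> measurable borel (count_space UNIV)"
  unfolding digit_def by measurable

lemma measurable_dyad_index [measurable]: "dyad_index j \<in> measurable borel (count_space UNIV)"
  unfolding dyad_index_def by measurable

lemma borel_measurable_walsh [measurable]: "walsh k \<in> borel_measurable borel"
  unfolding walsh_def by measurable

lemma borel_measurable_dirichlet [measurable]: "dirichlet k \<in> borel_measurable borel"
  unfolding dirichlet_def by measurable

lemma borel_measurable_dker [measurable]: "dker n i \<in> borel_measurable borel"
  unfolding dker_def by measurable

lemma borel_measurable_dplus [measurable]: "(\<lambda>x. dplus x y) \<in> borel_measurable borel"
  unfolding dplus_def by measurable

lemma borel_measurable_dtrans [measurable]: "dtrans y \<in> borel_measurable borel"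
  unfolding dtrans_def by measurable

lemma borel_measurable_lebesgue01 [measurable (raw)]:
  "f \<in> borel_measurable borel \<Longrightarrow> f \<in> borel_measurable lebesgue01"
  by (rule measurable_restrict_space1) simp

lemma measurable_dtrans_lebesgue01 [measurable]: "dtrans y \<in> measurable lebesgue01 lebesgue01"
proof (rule measurable_restrict_space2)
  show "dtrans y \<in> space lebesgue01 \<rightarrow> {0..<1}"
    using dtrans_mem by auto
  show "dtrans y \<in> measurable lebesgue01 lborel"
    by (rule measurable_restrict_space1) simp
qed

section \<open>Invariance of Lebesgue measure\<close>

definition dyad_cell :: "nat \<Rightarrow> nat \<Rightarrow> real set" where
  "dyad_cell j K = {x \<in> {0..<1}. dyad_index j x = K}"

lemma dyad_cell_eq_atLeastLessThan:
  assumes "K < 2 ^ j"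
  shows "dyad_cell j K = {real K / 2 ^ j..<(real K + 1) / 2 ^ j}"
proof -
  have "real K + 1 \<le> 2 ^ j"
    using assms by (metis Suc_leI of_nat_Suc of_nat_le_iff of_nat_numeral of_nat_power add.commute)
  then have upper: "(real K + 1) / 2 ^ j \<le> 1"
    by simp
  have mem: "x \<in> dyad_cell j K \<longleftrightarrow> real K / 2 ^ j \<le> x \<and> x < (real K + 1) / 2 ^ j" for x
  proof (cases "0 \<le> x")
    case True
    have "dyad_index j x = K \<longleftrightarrow> real K \<le> 2 ^ j * x \<and> 2 ^ j * x < real K + 1"
      using True by (simp add: dyad_index_def nat_eq_iff floor_eq_iff)
    also have "\<dots> \<longleftrightarrow> real K / 2 ^ j \<le> x \<and> x < (real K + 1) / 2 ^ j"
      by (simp add: field_simps)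
    finally have "dyad_index j x = K \<longleftrightarrow> real K / 2 ^ j \<le> x \<and> x < (real K + 1) / 2 ^ j" .
    moreover have "x < (real K + 1) / 2 ^ j \<Longrightarrow> x < 1"
      using upper by linarith
    ultimately show ?thesis
      using True unfolding dyad_cell_def by auto
  next
    case False
    have "0 \<le> real K / 2 ^ j"
      by simp
    then have "\<not> real K / 2 ^ j \<le> x"
      using False by linarith
    with False show ?thesis
      unfolding dyad_cell_def by auto
  qed
  then show ?thesis
    by (intro set_eqI) (simp only: mem atLeastLessThan_iff)
qed

lemma dyad_cell_empty: "\<not> K < 2 ^ j \<Longrightarrow> dyad_cell j K = {}"
  using dyad_index_less by (fastforce simp: dyad_cell_def)

lemma sets_dyad_cell [measurable]: "dyad_cell j K \<in> sets borel"
  unfolding dyad_cell_def by measurable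

lemma sets_lebesgue01_dyad_cell: "dyad_cell j K \<in> sets lebesgue01"
  by (subst sets_restrict_space_iff) (auto simp: dyad_cell_def)

lemma emeasure_dyad_cell:
  "emeasure lebesgue01 (dyad_cell j K) = (if K < 2 ^ j then ennreal (1 / 2 ^ j) else 0)"
proof (cases "K < 2 ^ j")
  case True
  have "emeasure lebesgue01 (dyad_cell j K) = emeasure lborel (dyad_cell j K)"
    by (rule emeasure_restrict_space) (auto simp: dyad_cell_def)
  also have "\<dots> = ennreal ((real K + 1) / 2 ^ j - real K / 2 ^ j)"
    unfolding dyad_cell_eq_atLeastLessThan[OF True] by (simp add: divide_right_mono)
  also have "(real K + 1) / 2 ^ j - real K / 2 ^ j = 1 / 2 ^ j"
    by (simp add: diff_divide_distrib[symmetric])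
  finally show ?thesis
    using True by simp
qed (simp add: dyad_cell_empty)

lemma dyad_int_eq_dyad_cell: "y \<in> {0..<1} \<Longrightarrow> dyad_int j y = dyad_cell j (dyad_index j y)"
  by (auto simp: dyad_int_def dyad_cell_def dyad_index_eq_iff)

lemma emeasure_digit_cylinder:
  assumes "\<And>i. c i \<le> 1"
  shows "emeasure lebesgue01 {x \<in> {0..<1}. \<forall>i<j. digit x i = c i} = ennreal (1 / 2 ^ j)"
proof -
  define y where "y = bin_value (\<lambda>i. if i < j then c i else 0)"
  have c: "\<And>i. (if i < j then c i else 0) \<le> 1"
    using assms by simp
  have zeros: "\<exists>\<^sub>\<infinity>i. (if i < j then c i else 0) = 0"
  proof (unfold INFM_nat_le, intro allI)
    show "\<exists>i\<ge>m. (if i < j then c i else 0) = 0" for m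
      by (rule exI[of _ "max m j"]) auto
  qed
  have "y \<in> {0..<1}"
    unfolding y_def using c zeros by (rule bin_value_mem)
  moreover have "digit y i = c i" if "i < j" for i
    unfolding y_def using digit_bin_value[OF c zeros, of i] that by simp
  ultimately have "{x \<in> {0..<1}. \<forall>i<j. digit x i = c i} = dyad_cell j (dyad_index j y)"
    by (simp add: dyad_int_def flip: dyad_int_eq_dyad_cell)
  then show ?thesis
    using emeasure_dyad_cell dyad_index_less[OF \<open>y \<in> {0..<1}\<close>] by simp
qed

lemma dyad_cell_Int:
  "dyad_cell j K \<inter> dyad_cell (j + d) K' = (if K' div 2 ^ d = K then dyad_cell (j + d) K' else {})"
  using dyad_index_div by (auto simp: dyad_cell_def)

lemma Int_stable_dyad_cells: "Int_stable (range (case_prod dyad_cell))"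
proof (rule Int_stableI)
  have "{} = case_prod dyad_cell (0, 1)"
    by (simp add: dyad_cell_empty)
  then have empty: "{} \<in> range (case_prod dyad_cell)"
    by (rule range_eqI)
  have "dyad_cell j K \<inter> dyad_cell j' K' \<in> range (case_prod dyad_cell)" for j K j' K'
  proof (cases "j \<le> j'")
    case True
    then obtain d where "j' = j + d"
      using le_Suc_ex by blast
    then show ?thesis
      using dyad_cell_Int[of j K d K'] empty by (auto simp: image_iff)
  next
    case False
    then obtain d where "j = j' + d"
      using le_Suc_ex[of j' j] by auto
    then show ?thesis
      using dyad_cell_Int[of j' K' d K] empty by (auto simp: image_iff Int_commute)
  qed
  then show "a \<inter> b \<in> range (case_prod dyad_cell)"
    if "a \<in> range (case_prod dyad_cell)" "b \<in> range (case_prod dyad_cell)" for a b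
    using that by auto
qed

lemma Int_lessThan_eq_Union_dyad_cells:
  "{0..<1} \<inter> {..<c} = (\<Union>(j, K) \<in> {(j, K). real K + 1 \<le> c * 2 ^ j}. dyad_cell j K)"
proof (intro set_eqI iffI)
  fix x assume x: "x \<in> {0..<1} \<inter> {..<c}"
  then obtain j where j: "(1/2) ^ j < c - x"
    using real_arch_pow_inv[of "c - x" "1/2"] by auto
  have "real (dyad_index j x) + 1 \<le> 2 ^ j * x + 1"
    using x dyad_index_bounds(2)[of x j] by simp
  also have "\<dots> < c * 2 ^ j"
    using j by (simp add: power_divide field_simps)
  finally show "x \<in> (\<Union>(j, K) \<in> {(j, K). real K + 1 \<le> c * 2 ^ j}. dyad_cell j K)"
    using x by (auto simp: dyad_cell_def intro!: exI[of _ j])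
next
  fix x assume "x \<in> (\<Union>(j, K) \<in> {(j, K). real K + 1 \<le> c * 2 ^ j}. dyad_cell j K)"
  then obtain j where x: "x \<in> {0..<1}" and "real (dyad_index j x) + 1 \<le> c * 2 ^ j"
    by (auto simp: dyad_cell_def)
  moreover have "x * 2 ^ j - 1 < real (dyad_index j x)"
    using x dyad_index_bounds(1)[of x j] by (simp add: mult.commute)
  ultimately have "x * 2 ^ j < c * 2 ^ j"
    by linarith
  then show "x \<in> {0..<1} \<inter> {..<c}"
    using x by simp
qed

lemma sets_lebesgue01_eq_sigma_dyad_cells:
  "sets lebesgue01 = sigma_sets {0..<1} (range (case_prod dyad_cell))"
proof
  have borel: "sets (borel :: real measure) = sigma_sets UNIV (range lessThan)"
    by (subst borel_Iio) (simp add: sets_measure_of)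
  have "sets lebesgue01 = (\<inter>) {0..<1} ` sets borel"
    by (simp add: sets_restrict_space)
  also have "\<dots> = sigma_sets {0..<1} ((\<inter>) {0..<1} ` range lessThan)"
  proof (unfold borel, rule sigma_sets_Int)
    have "{0..<1::real} \<in> sets borel"
      by simp
    then show "{0..<1::real} \<in> sigma_sets UNIV (range lessThan)"
      by (simp only: borel)
  qed simp
  also have "\<dots> \<subseteq> sigma_sets {0..<1} (range (case_prod dyad_cell))"
  proof (rule sigma_sets_mono, safe)
    fix c :: real
    have "countable {(j::nat, K::nat). real K + 1 \<le> c * 2 ^ j}"
      by (rule countable_subset[of _ UNIV]) auto
    then show "{0..<1} \<inter> {..<c} \<in> sigma_sets {0..<1} (range (case_prod dyad_cell))"
      unfolding Int_lessThan_eq_Union_dyad_cells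
      by (intro sigma_sets_UNION) (auto intro: sigma_sets.Basic)
  qed
  finally show "sets lebesgue01 \<subseteq> sigma_sets {0..<1} (range (case_prod dyad_cell))" .
next
  have "sigma_sets (space lebesgue01) (range (case_prod dyad_cell)) \<subseteq> sets lebesgue01"
    by (rule sets.sigma_sets_subset) (auto simp: sets_lebesgue01_dyad_cell)
  then show "sigma_sets {0..<1} (range (case_prod dyad_cell)) \<subseteq> sets lebesgue01"
    by (simp add: space_lebesgue01)
qed

lemma dxor_eq_digit_iff: "dxor x y i = digit z i \<longleftrightarrow> digit x i = dxor z y i"
  using digit_cases[of x i] digit_cases[of y i] digit_cases[of z i]
  by (elim disjE) (simp_all add: dxor_def)

lemma sets_lebesgue01_digit_cylinder: "{x \<in> {0..<1}. \<forall>i<j. digit x i = c i} \<in> sets lebesgue01"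
  by (subst sets_restrict_space_iff) auto

lemma sets_lebesgue01_dyad_int [measurable]: "dyad_int m y \<in> sets lebesgue01"
  unfolding dyad_int_def by (rule sets_lebesgue01_digit_cylinder)

text \<open>Up to a null set, the preimage of a dyadic interval under \<open>dtrans y\<close> is the dyadic
  interval of the same rank whose digits are the XOR of those of the image and of \<open>y\<close>.\<close>

lemma emeasure_dtrans_vimage_dyad_cell:
  "emeasure lebesgue01 (dtrans y -` dyad_cell j K \<inter> space lebesgue01) = emeasure lebesgue01 (dyad_cell j K)"
proof (cases "dyad_cell j K = {}")
  case False
  then obtain z where z: "z \<in> {0..<1}" and K: "K = dyad_index j z"
    by (auto simp: dyad_cell_def)
  have cell: "dyad_cell j K = {x \<in> {0..<1}. \<forall>i<j. digit x i = digit z i}"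
    using z by (simp add: K dyad_int_def flip: dyad_int_eq_dyad_cell)
  let ?C = "{x \<in> {0..<1}. \<forall>i<j. digit x i = dxor z y i}"
  have "emeasure lebesgue01 (dtrans y -` dyad_cell j K \<inter> space lebesgue01) = emeasure lebesgue01 ?C"
  proof (rule emeasure_eq_AE)
    show "AE x in lebesgue01. (x \<in> dtrans y -` dyad_cell j K \<inter> space lebesgue01) = (x \<in> ?C)"
      using AE_digits_agree_infinitely_often[of y]
    proof (rule AE_mp, intro AE_I2 impI)
      fix x assume "x \<in> space lebesgue01" and "\<exists>\<^sub>\<infinity>i. digit x i = digit y i"
      then show "(x \<in> dtrans y -` dyad_cell j K \<inter> space lebesgue01) = (x \<in> ?C)"
        unfolding cell using dtrans_mem[of y x]
        by (simp add: space_lebesgue01 digit_dtrans dxor_eq_digit_iff)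
    qed
    show "dtrans y -` dyad_cell j K \<inter> space lebesgue01 \<in> sets lebesgue01"
      using measurable_dtrans_lebesgue01 sets_lebesgue01_dyad_cell by (rule measurable_sets)
  qed (rule sets_lebesgue01_digit_cylinder)
  also have "\<dots> = emeasure lebesgue01 (dyad_cell j K)"
    unfolding cell
    using emeasure_digit_cylinder[of "dxor z y" j, OF dxor_le_1]
      emeasure_digit_cylinder[of "digit z" j, OF digit_le_1]
    by simp
  finally show ?thesis .
qed simp

lemma distr_dtrans_lebesgue01: "distr lebesgue01 lebesgue01 (dtrans y) = lebesgue01"
proof (rule measure_eqI_generator_eq[OF Int_stable_dyad_cells, where \<Omega> = "{0..<1}" and A = "\<lambda>_. {0..<1}", symmetric])
  show "range (case_prod dyad_cell) \<subseteq> Pow {0..<1}"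
    by (auto simp: dyad_cell_def)
  show "emeasure lebesgue01 X = emeasure (distr lebesgue01 lebesgue01 (dtrans y)) X"
    if "X \<in> range (case_prod dyad_cell)" for X
    using that emeasure_dtrans_vimage_dyad_cell
    by (auto simp: emeasure_distr[OF measurable_dtrans_lebesgue01 sets_lebesgue01_dyad_cell])
  have unit: "{0..<1} = dyad_cell 0 0"
    using dyad_index_0 by (auto simp: dyad_cell_def)
  show "range (\<lambda>_. {0..<1}) \<subseteq> range (case_prod dyad_cell)"
    unfolding unit by auto
  show "emeasure lebesgue01 {0..<1} \<noteq> \<infinity>"
    by (simp add: emeasure_restrict_space)
qed (simp_all add: sets_lebesgue01_eq_sigma_dyad_cells)

section \<open>Partial sums\<close>

lemma set_integral_lebesgue01:
  "set_lebesgue_integral lborel {0..<1} h = integral\<^sup>L lebesgue01 (h :: real \<Rightarrow> real)"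
  unfolding set_lebesgue_integral_def by (rule integral_restrict_space[symmetric]) simp

lemma set_integral_dyad_int:
  "set_lebesgue_integral lborel (dyad_int m y) h
    = integral\<^sup>L lebesgue01 (\<lambda>x. indicator (dyad_int m y) x * (h x :: real))"
proof -
  have "integral\<^sup>L lebesgue01 (\<lambda>x. indicator (dyad_int m y) x * h x)
      = integral\<^sup>L lborel (\<lambda>x. indicator {0..<1} x *\<^sub>R (indicator (dyad_int m y) x * h x))"
    by (rule integral_restrict_space) simp
  also have "\<dots> = integral\<^sup>L lborel (\<lambda>x. indicator (dyad_int m y) x *\<^sub>R h x)"
    by (intro Bochner_Integration.integral_cong) (auto simp: indicator_def dyad_int_def)
  finally show ?thesis
    by (simp add: set_lebesgue_integral_def)
qed

lemma abs_walsh [simp]: "\<bar>walsh k x\<bar> = 1"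
  by (simp add: walsh_def abs_prod power_abs)

lemma abs_dirichlet_le: "\<bar>dirichlet n x\<bar> \<le> real n"
proof -
  have "\<bar>dirichlet n x\<bar> \<le> (\<Sum>k<n. \<bar>walsh k x\<bar>)"
    unfolding dirichlet_def by (rule sum_abs)
  then show ?thesis
    by simp
qed

lemma abs_dker_le: "\<bar>dker n i x\<bar> \<le> 3 * 2 ^ i"
proof -
  have "\<bar>dirichlet (2 ^ i) x - dirichlet (2 ^ (i + 1)) x\<bar> \<le> 2 ^ i + 2 ^ (i + 1)"
    using abs_dirichlet_le[of "2 ^ i" x] abs_dirichlet_le[of "2 ^ (i + 1)" x] by simp
  then show ?thesis
    by (simp add: dker_def lam_def abs_mult)
qed

lemma integrable_mult_bounded:
  fixes f g :: "'a \<Rightarrow> real"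
  assumes "integrable M f" "g \<in> borel_measurable M" "\<And>x. \<bar>g x\<bar> \<le> C"
  shows "integrable M (\<lambda>x. f x * g x)"
proof (rule Bochner_Integration.integrable_bound)
  show "integrable M (\<lambda>x. C * f x)"
    using assms(1) by simp
  show "AE x in M. norm (f x * g x) \<le> norm (C * f x)"
  proof (intro AE_I2)
    fix x
    have "\<bar>f x\<bar> * \<bar>g x\<bar> \<le> \<bar>f x\<bar> * C" and "0 \<le> C"
      using assms(3)[of x] by (auto intro: mult_left_mono)
    then show "norm (f x * g x) \<le> norm (C * f x)"
      by (simp add: abs_mult mult.commute)
  qed
qed (use assms in measurable)

lemma walsh_dtrans:
  assumes "\<exists>\<^sub>\<infinity>i. digit x i = digit y i"
  shows "walsh k (dtrans y x) = walsh k x * walsh k y"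
proof -
  have "(-1::real) ^ (digit (dtrans y x) j * nbit k j)
      = (-1) ^ (digit x j * nbit k j) * (-1) ^ (digit y j * nbit k j)" for j
    using digit_cases[of x j] digit_cases[of y j]
    by (elim disjE) (simp_all add: digit_dtrans[OF assms] dxor_def power_mult[symmetric])
  then show ?thesis
    by (simp add: walsh_def prod.distrib)
qed

lemma dirichlet_pow2_dtrans:
  assumes "x \<in> {0..<1}" "\<exists>\<^sub>\<infinity>i. digit x i = digit y i"
  shows "dirichlet (2 ^ a) (dtrans y x) = 2 ^ a * indicator (dyad_int a y) x"
proof -
  have "(\<forall>j<a. digit (dtrans y x) j = 0) \<longleftrightarrow> x \<in> dyad_int a y"
    using assms by (auto simp: dyad_int_def digit_dtrans dxor_def)
  then show ?thesis
    by (simp add: dirichlet_pow2 indicator_def)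
qed

lemma partial_sum_eq_integral:
  assumes f: "integrable lebesgue01 f"
  shows "partial_sum n f y = (\<integral>x. f x * dirichlet n (dtrans y x) \<partial>lebesgue01)"
proof -
  have [measurable]: "f \<in> borel_measurable lebesgue01"
    using f by (rule borel_measurable_integrable)
  have "integrable lebesgue01 (\<lambda>x. f x * walsh k x * walsh k y)" for k
    using integrable_mult_bounded[OF f, of "walsh k" 1] by simp
  then have "partial_sum n f y = (\<integral>x. (\<Sum>k<n. f x * walsh k x * walsh k y) \<partial>lebesgue01)"
    by (simp add: partial_sum_def walsh_coeff_def set_integral_lebesgue01)
  also have "\<dots> = (\<integral>x. f x * dirichlet n (dtrans y x) \<partial>lebesgue01)"
    using AE_digits_agree_infinitely_often[of y]
    by (intro integral_cong_AE) (auto elim!: AE_mp simp: dirichlet_def walsh_dtrans sum_distrib_left mult.assoc)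
  finally show ?thesis .
qed

text \<open>The integrand of \<open>dconv\<close> evaluates \<open>f\<close> at \<open>dplus x y\<close>, which may leave \<open>[0,1)\<close>
  (at the point \<open>1\<close>); rewriting it through \<open>dtrans y\<close> makes it measurable.\<close>

lemma dconv_eq_integral:
  assumes [measurable]: "f \<in> borel_measurable lebesgue01" "g \<in> borel_measurable lebesgue01"
  shows "dconv f g y = (\<integral>x. f x * g (dtrans y x) \<partial>lebesgue01)"
proof -
  have "f (dplus x y) = (if dplus x y < 1 then f (dtrans y x) else f 1)" for x
  proof -
    have "dplus x y \<le> 1"
      using bin_value_le_1[of "dxor x y", OF dxor_le_1] by (simp add: dplus_eq_bin_value)
    then show ?thesis
      by (cases "dplus x y < 1") (simp_all add: dtrans_def)
  qed
  then have [measurable]: "(\<lambda>x. f (dplus x y) * g x) \<in> borel_measurable lebesgue01"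
    by (simp only:) measurable
  have "dconv f g y = (\<integral>x. f (dplus x y) * g x \<partial>lebesgue01)"
    by (simp add: dconv_def set_integral_lebesgue01)
  also have "\<dots> = (\<integral>x. f (dtrans y x) * g (dtrans y (dtrans y x)) \<partial>lebesgue01)"
  proof (rule integral_cong_AE)
    show "AE x in lebesgue01. f (dplus x y) * g x = f (dtrans y x) * g (dtrans y (dtrans y x))"
      using AE_digits_agree_infinitely_often[of y]
    proof (rule AE_mp, intro AE_I2 impI)
      fix x assume "x \<in> space lebesgue01" and agree: "\<exists>\<^sub>\<infinity>i. digit x i = digit y i"
      then have "x \<in> {0..<1}"
        by (simp add: space_lebesgue01)
      then show "f (dplus x y) * g x = f (dtrans y x) * g (dtrans y (dtrans y x))"
        using dtrans_eq_dplus[OF agree] dtrans_dtrans[OF _ agree] by metis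
    qed
  qed measurable
  also have "\<dots> = (\<integral>x. f x * g (dtrans y x) \<partial>distr lebesgue01 lebesgue01 (dtrans y))"
    by (rule integral_distr[symmetric]) measurable
  finally show ?thesis
    by (simp add: distr_dtrans_lebesgue01)
qed

lemma dirichlet_dtrans_decomp:
  assumes "1 \<le> n" "x \<in> {0..<1}" "\<exists>\<^sub>\<infinity>i. digit x i = digit y i"
  shows "dirichlet n (dtrans y x) = 2 ^ (top_bit n + 1) * indicator (dyad_int (top_bit n + 1) y) x
    - walsh n y * (2 ^ low_bit n * indicator (dyad_int (low_bit n) y) x * walsh n x)
    + (\<Sum>i<top_bit n. dker n i (dtrans y x))"
  unfolding dirichlet_decomp_dker[OF assms(1), of "dtrans y x"]
  using dirichlet_pow2_dtrans[OF assms(2,3), of "top_bit n + 1"]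
    dirichlet_pow2_dtrans[OF assms(2,3), of "low_bit n"]
  by (simp add: walsh_dtrans[OF assms(3)])

lemma partial_sum_decomp:
  assumes f: "integrable lebesgue01 f" and "1 \<le> n"
  shows "partial_sum n f y = cond_exp_dyad (top_bit n + 1) f y
    - walsh n y * cond_exp_dyad (low_bit n) (\<lambda>x. f x * walsh n x) y
    + (\<Sum>i<top_bit n. dconv f (dker n i) y)"
proof -
  have [measurable]: "f \<in> borel_measurable lebesgue01"
    using f by (rule borel_measurable_integrable)
  define M where "M = top_bit n + 1"
  define m where "m = low_bit n"
  let ?I = "\<lambda>j x. indicator (dyad_int j y) x :: real"
  let ?h = "\<lambda>x. 2 ^ M * (?I M x * f x) - walsh n y * (2 ^ m * (?I m x * (f x * walsh n x)))
    + (\<Sum>i<top_bit n. f x * dker n i (dtrans y x))"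
  have integrable:
    "integrable lebesgue01 (\<lambda>x. ?I j x * f x)"
    "integrable lebesgue01 (\<lambda>x. ?I j x * (f x * walsh n x))"
    "integrable lebesgue01 (\<lambda>x. f x * dker n i (dtrans y x))" for i j
  proof -
    show "integrable lebesgue01 (\<lambda>x. ?I j x * f x)"
      using integrable_mult_bounded[OF f, of "?I j" 1] by (simp add: mult.commute)
    show "integrable lebesgue01 (\<lambda>x. ?I j x * (f x * walsh n x))"
      using integrable_mult_bounded[OF f, of "\<lambda>x. ?I j x * walsh n x" 1]
      by (simp add: abs_mult algebra_simps)
    show "integrable lebesgue01 (\<lambda>x. f x * dker n i (dtrans y x))"
      by (intro integrable_mult_bounded[OF f, of _ "3 * 2 ^ i"] abs_dker_le) measurable
  qed
  then have "integrable lebesgue01 ?h"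
    by simp
  from integrable have integral_h: "integral\<^sup>L lebesgue01 ?h = 2 ^ M * (\<integral>x. ?I M x * f x \<partial>lebesgue01)
      - walsh n y * (2 ^ m * (\<integral>x. ?I m x * (f x * walsh n x) \<partial>lebesgue01))
      + (\<Sum>i<top_bit n. \<integral>x. f x * dker n i (dtrans y x) \<partial>lebesgue01)"
    by (simp add: Bochner_Integration.integral_sum)
  have "partial_sum n f y = (\<integral>x. f x * dirichlet n (dtrans y x) \<partial>lebesgue01)"
    using f by (rule partial_sum_eq_integral)
  also have "\<dots> = integral\<^sup>L lebesgue01 ?h"
  proof (rule integral_cong_AE)
    show "AE x in lebesgue01. f x * dirichlet n (dtrans y x) = ?h x"
      using AE_digits_agree_infinitely_often[of y]
    proof (rule AE_mp, intro AE_I2 impI)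
      fix x assume "x \<in> space lebesgue01" "\<exists>\<^sub>\<infinity>i. digit x i = digit y i"
      then show "f x * dirichlet n (dtrans y x) = ?h x"
        using \<open>1 \<le> n\<close> unfolding M_def m_def
        by (simp add: space_lebesgue01 dirichlet_dtrans_decomp algebra_simps sum_distrib_left)
    qed
    show "(\<lambda>x. f x * dirichlet n (dtrans y x)) \<in> borel_measurable lebesgue01"
      by measurable
    show "?h \<in> borel_measurable lebesgue01"
      using \<open>integrable lebesgue01 ?h\<close> by (rule borel_measurable_integrable)
  qed
  also have "\<dots> = cond_exp_dyad M f y - walsh n y * cond_exp_dyad m (\<lambda>x. f x * walsh n x) y
      + (\<Sum>i<top_bit n. dconv f (dker n i) y)"
    unfolding integral_h
    by (simp add: cond_exp_dyad_def set_integral_dyad_int dconv_eq_integral)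
  finally show ?thesis
    unfolding M_def m_def .
qed

theorem proposition2p1:
  fixes n :: nat
  assumes "n \<ge> 1"
  shows "(\<forall>x\<in>{0..<1}. dirichlet n x =
            dirichlet (2 ^ (top_bit n + 1)) x - walsh n x * dirichlet (2 ^ low_bit n) x
            + (\<Sum>i<top_bit n. dker n i x))
       \<and> (\<forall>f :: real \<Rightarrow> real. set_integrable lborel {0..<1} f \<longrightarrow>
            (AE y in lborel. y \<in> {0..<1} \<longrightarrow>
               partial_sum n f y =
                 cond_exp_dyad (top_bit n + 1) f y
                 - walsh n y * cond_exp_dyad (low_bit n) (\<lambda>x. f x * walsh n x) y
                 + (\<Sum>i<top_bit n. dconv f (dker n i) y)))"
proof (intro conjI ballI allI impI)
  show "dirichlet n x = dirichlet (2 ^ (top_bit n + 1)) x - walsh n x * dirichlet (2 ^ low_bit n) x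
      + (\<Sum>i<top_bit n. dker n i x)" for x
    using assms by (rule dirichlet_decomp_dker)
  fix f :: "real \<Rightarrow> real"
  assume "set_integrable lborel {0..<1} f"
  then have "integrable lebesgue01 f"
    by (simp add: set_integrable_def integrable_restrict_space)
  then show "AE y in lborel. y \<in> {0..<1} \<longrightarrow> partial_sum n f y =
      cond_exp_dyad (top_bit n + 1) f y - walsh n y * cond_exp_dyad (low_bit n) (\<lambda>x. f x * walsh n x) y
      + (\<Sum>i<top_bit n. dconv f (dker n i) y)"
    using assms by (simp add: partial_sum_decomp)
qed

end
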